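(* Let $D$ be a dendrite and let $A_1,A_2,B_1,B_2$ be nondegenerate subdendrites of $D$ such that $A_i\cap B_i=\emptyset$ for $i\in\{1,2\}$ and the intersections $A_1\cap A_2$, $B_1\cap B_2$ and $A_1\cap B_2$ are nonempty. For $i\in\{1,2\}$ let $C_i$ be the (unique) component of $D\setminus B_i$ containing $A_i$. Then for each $i\in\{1,2\}$ we have $\operatorname{Bd}(C_i)=\operatorname{Bd}(\overline{C_i})=\{c_i\}$ for some point $c_i\in B_i$ which is a cutpoint of $D$. Moreover, $c_2\in A_1\cap B_2$, $c_1\notin\overline{C_2}$, and $C_2\subsetneq C_1$.
   Context: A dendrite is a locally connected continuum containing no simple closed curve; a subdendrite is a subcontinuum. $\operatorname{Bd}$ denotes the topological boundary in $D$. A cutpoint of $D$ is a point $x$ with $D\setminus\{x\}$ disconnected. *)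

theory Defs
  imports "HOL-Analysis.Analysis"
begin

definition continuum :: "'a::metric_space set \<Rightarrow> bool" where
  "continuum X \<longleftrightarrow> X \<noteq> {} \<and> compact X \<and> connected X"

definition simple_closed_curve :: "'a::metric_space set \<Rightarrow> bool" where
  "simple_closed_curve S \<longleftrightarrow> S homeomorphic sphere (0::complex) 1"

definition dendrite :: "'a::metric_space set \<Rightarrow> bool" where
  "dendrite D \<longleftrightarrow> continuum D \<and> locally connected D \<and>
     \<not> (\<exists>S. S \<subseteq> D \<and> simple_closed_curve S)"

definition subdendrite :: "'a::metric_space set \<Rightarrow> 'a set \<Rightarrow> bool" where
  "subdendrite D A \<longleftrightarrow> A \<subseteq> D \<and> continuum A"

definition nondegenerate :: "'a set \<Rightarrow> bool" where
  "nondegenerate A \<longleftrightarrow> (\<exists>x y. x \<in> A \<and> y \<in> A \<and> x \<noteq> y)"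

definition Bd :: "'a::metric_space set \<Rightarrow> 'a set \<Rightarrow> 'a set" where
  "Bd D C = (subtopology euclidean D) frontier_of C"

definition clD :: "'a::metric_space set \<Rightarrow> 'a set \<Rightarrow> 'a set" where
  "clD D C = (subtopology euclidean D) closure_of C"

definition cutpoint :: "'a::metric_space set \<Rightarrow> 'a \<Rightarrow> bool" where
  "cutpoint D x \<longleftrightarrow> x \<in> D \<and> \<not> connected (D - {x})"

end

theory Submission
  imports Defs
begin

text \<open>
  Every two points \<open>p \<noteq> q\<close> of a dendrite are separated by a third one, the midpoint of an arc
  from \<open>p\<close> to \<open>q\<close>: an arc from \<open>p\<close> to \<open>q\<close> avoiding it would close up a simple closed curve.
  Arcs exist because compact locally connected subsets of a Banach space are locally path
  connected (uniform limits of finer and finer polygonal chains), and every metric space embeds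
  isometrically into a Banach space.

  Consequently, if \<open>B\<close> is a subcontinuum and \<open>C\<close> a component of \<open>D - B\<close>, then \<open>C\<close> has a
  single limit point \<open>c\<close> outside itself, \<open>c \<in> B\<close>, and \<open>C\<close> is even a component of
  \<open>D - {c}\<close>; this gives the boundary statements and shows that \<open>c\<close> is a cutpoint.
  In the configuration of the theorem, \<open>A\<^sub>1\<close> is connected and meets both \<open>C\<^sub>2\<close> (through
  \<open>A\<^sub>2\<close>) and \<open>B\<^sub>2\<close>, so it contains \<open>c\<^sub>2\<close>; likewise \<open>B\<^sub>1\<close> misses \<open>C\<^sub>2\<close>.  Hence
  \<open>C\<^sub>2 \<union> {c\<^sub>2}\<close> is a connected subset of \<open>D - B\<^sub>1\<close> meeting \<open>C\<^sub>1\<close>, so it lies in \<open>C\<^sub>1\<close>.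
\<close>

lemma compact_locally_connected_imp_uniformly_locally_connected:
  fixes D :: "'a::metric_space set"
  assumes "compact D" "locally connected D" "e > 0"
  obtains d where "d > 0"
    "\<And>a b. a \<in> D \<Longrightarrow> b \<in> D \<Longrightarrow> dist a b < d \<Longrightarrow>
       \<exists>E. connected E \<and> E \<subseteq> D \<and> E \<subseteq> ball a e \<and> a \<in> E \<and> b \<in> E"
proof -
  define G where "G = {W. open W \<and> (\<exists>y V. connected V \<and> D \<inter> W \<subseteq> V \<and> V \<subseteq> D \<inter> ball y (e/2))}"
  have "D \<subseteq> \<Union>G"
  proof
    fix y assume "y \<in> D"
    then obtain U V where UV: "openin (top_of_set D) U" "connected V" "y \<in> U" "U \<subseteq> V"
        "V \<subseteq> D \<inter> ball y (e/2)"
      using assms(2,3) unfolding locally_def by (meson centre_in_ball half_gt_zero IntI openin_open_Int open_ball)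
    then obtain W where "open W" "U = D \<inter> W" by (meson openin_open)
    with UV show "y \<in> \<Union>G" unfolding G_def by blast
  qed
  then obtain d where "d > 0" and d: "\<And>x. x \<in> D \<Longrightarrow> \<exists>W\<in>G. ball x d \<subseteq> W"
    using Heine_Borel_lemma[OF assms(1)] by (metis (no_types, lifting) G_def mem_Collect_eq)
  have "\<exists>E. connected E \<and> E \<subseteq> D \<and> E \<subseteq> ball a e \<and> a \<in> E \<and> b \<in> E"
    if "a \<in> D" "b \<in> D" "dist a b < d" for a b
  proof -
    obtain W y V where "ball a d \<subseteq> W" "connected V" "D \<inter> W \<subseteq> V" "V \<subseteq> D \<inter> ball y (e/2)"
      using d[OF \<open>a \<in> D\<close>] unfolding G_def by blast
    moreover have "a \<in> ball a d" "b \<in> ball a d" using \<open>d > 0\<close> that by auto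
    moreover have "ball y (e/2) \<subseteq> ball a e" if "a \<in> ball y (e/2)"
      using that by metric
    ultimately show ?thesis using that by blast
  qed
  with \<open>d > 0\<close> show thesis using that by blast
qed

inductive polygonal_chain :: "'a::real_normed_vector set \<Rightarrow> real \<Rightarrow> 'a \<Rightarrow> 'a \<Rightarrow> (real \<Rightarrow> 'a) \<Rightarrow> bool"
  for D d where
  segment: "a \<in> D \<Longrightarrow> b \<in> D \<Longrightarrow> dist a b < d \<Longrightarrow> polygonal_chain D d a b (linepath a b)"
| join: "polygonal_chain D d a c g \<Longrightarrow> polygonal_chain D d c b h \<Longrightarrow> polygonal_chain D d a b (g +++ h)"

lemma polygonal_chain_path:
  "polygonal_chain D d a b g \<Longrightarrow> path g \<and> pathstart g = a \<and> pathfinish g = b"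
  by (induction rule: polygonal_chain.induct) auto

lemma joinpaths_pointwise_rel:
  assumes "\<And>s. s \<in> {0..1} \<Longrightarrow> R (g s) (g' s)" "\<And>s. s \<in> {0..1} \<Longrightarrow> R (h s) (h' s)"
    and "t \<in> {0..1}"
  shows "R ((g +++ h) t) ((g' +++ h') t)"
  using assms by (cases "t \<le> 1/2") (auto simp: joinpaths_def)

lemma dist_linepath_start_le:
  fixes a b :: "'a::real_normed_vector"
  assumes "t \<in> {0..1}"
  shows "dist a (linepath a b t) \<le> dist a b"
proof -
  have "dist a (linepath a b t) = t * norm (b - a)"
    using assms by (simp add: linepath_def dist_norm algebra_simps norm_minus_commute flip: scaleR_diff_right)
  also have "\<dots> \<le> dist a b"
    using assms by (simp add: mult_left_le_one_le dist_norm norm_minus_commute)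
  finally show ?thesis .
qed

lemma polygonal_chain_near:
  assumes "polygonal_chain D d a b g" "t \<in> {0..1}"
  shows "\<exists>u\<in>D. dist u (g t) < d"
  using assms
proof (induction arbitrary: t rule: polygonal_chain.induct)
  case (segment a b)
  then show ?case
    using dist_linepath_start_le[of t a b] by force
next
  case (join a c g b h)
  then show ?case
    using joinpaths_pointwise_rel[where R = "\<lambda>x y. \<exists>u\<in>D. dist u x < d"] by blast
qed

lemma polygonal_chain_within_convex:
  assumes "connected E" "E \<subseteq> D" "E \<subseteq> K" "convex K" "x \<in> E" "y \<in> E" "d > 0"
  shows "\<exists>h. polygonal_chain D d x y h \<and> path_image h \<subseteq> K"
proof -
  define P where "P z \<longleftrightarrow> (\<exists>h. polygonal_chain D d x z h \<and> path_image h \<subseteq> K)" for z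
  have "P y"
  proof (rule connected_induction_simple[OF assms(1,5,6)])
    show "P x"
      using assms unfolding P_def by (intro exI[of _ "linepath x x"]) (auto intro: polygonal_chain.segment)
    fix z assume "z \<in> E"
    show "\<exists>T. openin (top_of_set E) T \<and> z \<in> T \<and> (\<forall>u\<in>T. \<forall>w\<in>T. P u \<longrightarrow> P w)"
    proof (intro exI conjI ballI impI)
      show "openin (top_of_set E) (E \<inter> ball z (d/2))" by (simp add: openin_open_Int)
      show "z \<in> E \<inter> ball z (d/2)" using \<open>z \<in> E\<close> \<open>d > 0\<close> by simp
      fix u w assume u: "u \<in> E \<inter> ball z (d/2)" and w: "w \<in> E \<inter> ball z (d/2)" and "P u"
      then obtain h where h: "polygonal_chain D d x u h" "path_image h \<subseteq> K"
        unfolding P_def by blast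
      have "dist z u < d/2" "dist z w < d/2" using u w by auto
      then have "dist u w < d" by metric
      then have "polygonal_chain D d x w (h +++ linepath u w)"
        using u w assms(2) by (intro polygonal_chain.join[OF h(1)] polygonal_chain.segment) auto
      moreover have "closed_segment u w \<subseteq> K"
        using u w assms(3,4) by (intro closed_segment_subset) auto
      then have "path_image (h +++ linepath u w) \<subseteq> K"
        using h(2) polygonal_chain_path[OF h(1)] by (simp add: path_image_join)
      ultimately show "P w"
        unfolding P_def by blast
    qed
  qed
  then show ?thesis by (simp add: P_def)
qed

lemma polygonal_chain_refine:
  assumes ulc: "\<And>a b. a \<in> D \<Longrightarrow> b \<in> D \<Longrightarrow> dist a b < d \<Longrightarrow>
       \<exists>E. connected E \<and> E \<subseteq> D \<and> E \<subseteq> ball a e \<and> a \<in> E \<and> b \<in> E"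
    and "d \<le> e" "d' > 0"
    and "polygonal_chain D d a b g"
  shows "\<exists>h. polygonal_chain D d' a b h \<and> (\<forall>t\<in>{0..1}. dist (g t) (h t) < 2 * e)"
  using assms(4)
proof (induction rule: polygonal_chain.induct)
  case (segment a b)
  then obtain E where E: "connected E" "E \<subseteq> D" "E \<subseteq> ball a e" "a \<in> E" "b \<in> E"
    using ulc by blast
  obtain h where h: "polygonal_chain D d' a b h" "path_image h \<subseteq> ball a e"
    using polygonal_chain_within_convex[OF E(1-3) convex_ball E(4,5) \<open>d' > 0\<close>] by blast
  have "dist (linepath a b t) (h t) < 2 * e" if "t \<in> {0..1}" for t
  proof -
    have "dist a (linepath a b t) < e"
      using dist_linepath_start_le[OF that, of a b] segment \<open>d \<le> e\<close> by linarith
    moreover have "dist a (h t) < e"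
      using h(2) that by (force simp: path_image_def)
    ultimately show ?thesis by metric
  qed
  then show ?case using h(1) by blast
next
  case (join a c g b k)
  then obtain h1 h2 where h: "polygonal_chain D d' a c h1" "polygonal_chain D d' c b h2"
    and close: "\<forall>t\<in>{0..1}. dist (g t) (h1 t) < 2 * e" "\<forall>t\<in>{0..1}. dist (k t) (h2 t) < 2 * e"
    by blast
  have "\<forall>t\<in>{0..1}. dist ((g +++ k) t) ((h1 +++ h2) t) < 2 * e"
    using joinpaths_pointwise_rel[where R = "\<lambda>x y. dist x y < 2 * e"] close by blast
  then show ?case
    using polygonal_chain.join[OF h] by blast
qed

lemma path_limit_of_geometric_cauchy:
  fixes G :: "nat \<Rightarrow> real \<Rightarrow> 'a::complete_space"
  assumes paths: "\<And>n. path (G n)" "\<And>n. pathstart (G n) = a" "\<And>n. pathfinish (G n) = b"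
    and step: "\<And>n t. t \<in> {0..1} \<Longrightarrow> dist (G n t) (G (Suc n) t) \<le> c / 2 ^ n"
  obtains g where "path g" "pathstart g = a" "pathfinish g = b"
    "\<And>n t. t \<in> {0..1} \<Longrightarrow> dist (G n t) (g t) \<le> 2 * c / 2 ^ n"
proof -
  have "c \<ge> 0"
    using order_trans[OF zero_le_dist step[of 0 0]] by simp
  have telescope: "dist (G m t) (G (m + j) t) \<le> 2 * c / 2 ^ m - 2 * c / 2 ^ (m + j)"
    if "t \<in> {0..1}" for m j t
  proof (induction j)
    case (Suc j)
    have "dist (G m t) (G (m + Suc j) t) \<le> dist (G m t) (G (m + j) t) + dist (G (m + j) t) (G (Suc (m + j)) t)"
      by (simp add: dist_triangle)
    also have "\<dots> \<le> 2 * c / 2 ^ m - 2 * c / 2 ^ (m + j) + c / 2 ^ (m + j)"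
      using Suc step[OF that, of "m + j"] by linarith
    finally show ?case by simp
  qed simp
  have bound: "dist (G m t) (G n t) \<le> 2 * c / 2 ^ m" if "t \<in> {0..1}" "m \<le> n" for m n t
  proof -
    have "2 * c / 2 ^ n \<ge> 0" using \<open>c \<ge> 0\<close> by simp
    moreover have "dist (G m t) (G n t) \<le> 2 * c / 2 ^ m - 2 * c / 2 ^ n"
      using telescope[OF that(1), of m "n - m"] that(2) by simp
    ultimately show ?thesis by linarith
  qed
  have small: "\<exists>M. 2 * c / 2 ^ M < e" if "e > 0" for e
  proof -
    obtain M where "2 * c / e < 2 ^ M" using real_arch_pow[of 2 "2 * c / e"] by auto
    with that show ?thesis by (auto simp: field_simps)
  qed
  have "uniformly_Cauchy_on {0..1} G"
  proof (rule uniformly_Cauchy_onI')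
    fix e :: real assume "e > 0"
    then obtain M where M: "2 * c / 2 ^ M < e" using small by blast
    have "dist (G m t) (G n t) < e" if "t \<in> {0..1}" "M \<le> m" "m < n" for t m n
    proof -
      have "2 * c / 2 ^ m \<le> 2 * c / 2 ^ M"
        using \<open>c \<ge> 0\<close> \<open>M \<le> m\<close> by (intro divide_left_mono) (auto simp: power_increasing)
      then show ?thesis using bound[OF that(1), of m n] that M by linarith
    qed
    then show "\<exists>M. \<forall>t\<in>{0..1}. \<forall>m\<ge>M. \<forall>n>m. dist (G m t) (G n t) < e" by blast
  qed
  then have lim: "uniform_limit {0..1} G (\<lambda>t. lim (\<lambda>n. G n t)) sequentially"
    using Cauchy_uniformly_convergent uniformly_convergent_uniform_limit_iff by blast
  define g where "g t = lim (\<lambda>n. G n t)" for t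
  show thesis
  proof
    show "path g"
      unfolding path_def g_def using paths(1) lim by (intro uniform_limit_theorem) (auto simp: path_def)
    show "pathstart g = a" "pathfinish g = b"
      using paths(2,3) by (simp_all add: g_def pathstart_def pathfinish_def)
    fix n and t :: real assume "t \<in> {0..1}"
    show "dist (G n t) (g t) \<le> 2 * c / 2 ^ n"
    proof (rule Lim_dist_ubound[OF trivial_limit_sequentially])
      show "(\<lambda>m. G m t) \<longlonglongrightarrow> g t"
        using tendsto_uniform_limitI[OF lim \<open>t \<in> {0..1}\<close>] by (simp add: g_def)
      show "\<forall>\<^sub>F m in sequentially. dist (G n t) (G m t) \<le> 2 * c / 2 ^ n"
        using bound[OF \<open>t \<in> {0..1}\<close>] by (auto simp: eventually_sequentially)
    qed
  qed
qed

lemma polygonal_chain_refinement_sequence: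
  assumes "\<And>n. \<delta> n > 0" "\<And>n. \<delta> n \<le> c / 2 ^ n"
    "\<And>n a b. a \<in> D \<Longrightarrow> b \<in> D \<Longrightarrow> dist a b < \<delta> n \<Longrightarrow>
       \<exists>E. connected E \<and> E \<subseteq> D \<and> E \<subseteq> ball a (c / 2 ^ n) \<and> a \<in> E \<and> b \<in> E"
    and ab: "a \<in> D" "b \<in> D" "dist a b < \<delta> 0"
  obtains G where "G 0 = linepath a b" "\<And>n. polygonal_chain D (\<delta> n) a b (G n)"
    "\<And>n t. t \<in> {0..1} \<Longrightarrow> dist (G n t) (G (Suc n) t) \<le> 2 * c / 2 ^ n"
proof -
  have refine: "\<exists>h. polygonal_chain D (\<delta> (Suc n)) a b h \<and>
      (\<forall>t\<in>{0..1}. dist (g t) (h t) < 2 * (c / 2 ^ n))"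
    if "polygonal_chain D (\<delta> n) a b g" for n g
    using polygonal_chain_refine[OF assms(3) assms(2) assms(1) that] .
  have "\<exists>G. \<forall>n. (polygonal_chain D (\<delta> n) a b (G n) \<and> (n = 0 \<longrightarrow> G n = linepath a b)) \<and>
           (\<forall>t\<in>{0..1}. dist (G n t) (G (Suc n) t) < 2 * (c / 2 ^ n))"
    by (rule dependent_nat_choice) (use polygonal_chain.segment[OF ab] refine in auto)
  then show thesis
    using that by (metis less_imp_le times_divide_eq_right)
qed

lemma compact_locally_connected_geometric_scales:
  fixes D :: "'a::metric_space set"
  assumes "compact D" "locally connected D" "c > 0"
  obtains \<delta> where "\<And>n. \<delta> n > 0" "\<And>n. \<delta> n \<le> c / 2 ^ n"
    "\<And>n a b. a \<in> D \<Longrightarrow> b \<in> D \<Longrightarrow> dist a b < \<delta> n \<Longrightarrow>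
       \<exists>E. connected E \<and> E \<subseteq> D \<and> E \<subseteq> ball a (c / 2 ^ n) \<and> a \<in> E \<and> b \<in> E"
proof -
  have "\<exists>d>0. d \<le> c / 2 ^ n \<and> (\<forall>a\<in>D. \<forall>b\<in>D. dist a b < d \<longrightarrow>
           (\<exists>E. connected E \<and> E \<subseteq> D \<and> E \<subseteq> ball a (c / 2 ^ n) \<and> a \<in> E \<and> b \<in> E))" for n
  proof -
    obtain d where "d > 0" "\<And>a b. a \<in> D \<Longrightarrow> b \<in> D \<Longrightarrow> dist a b < d \<Longrightarrow>
       \<exists>E. connected E \<and> E \<subseteq> D \<and> E \<subseteq> ball a (c / 2 ^ n) \<and> a \<in> E \<and> b \<in> E"
      using compact_locally_connected_imp_uniformly_locally_connected[OF assms(1,2)] \<open>c > 0\<close>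
      by (metis divide_pos_pos zero_less_numeral zero_less_power)
    then show ?thesis
      using \<open>c > 0\<close> by (intro exI[of _ "min d (c / 2 ^ n)"]) auto
  qed
  then show thesis
    using that by metis
qed

text \<open>Chains at the scales \<open>c / 2 ^ n\<close> are refined one into the next; their uniform limit is a
  path in \<open>D\<close> (which is closed) staying within \<open>5 * c\<close> of its start.\<close>

lemma compact_locally_connected_imp_uniformly_locally_path_connected:
  fixes D :: "'a::{real_normed_vector,complete_space} set"
  assumes "compact D" "locally connected D" "e > 0"
  obtains d where "d > 0"
    "\<And>a b. a \<in> D \<Longrightarrow> b \<in> D \<Longrightarrow> dist a b < d \<Longrightarrow>
       \<exists>g. path g \<and> path_image g \<subseteq> D \<inter> ball a e \<and> pathstart g = a \<and> pathfinish g = b"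
proof -
  define c where "c = e / 5"
  have "c > 0"
    using \<open>e > 0\<close> by (simp add: c_def)
  obtain \<delta> where \<delta>: "\<And>n. \<delta> n > 0" "\<And>n. \<delta> n \<le> c / 2 ^ n"
    "\<And>n a b. a \<in> D \<Longrightarrow> b \<in> D \<Longrightarrow> dist a b < \<delta> n \<Longrightarrow>
       \<exists>E. connected E \<and> E \<subseteq> D \<and> E \<subseteq> ball a (c / 2 ^ n) \<and> a \<in> E \<and> b \<in> E"
    using compact_locally_connected_geometric_scales[OF assms(1,2) \<open>c > 0\<close>] by blast
  have "\<exists>g. path g \<and> path_image g \<subseteq> D \<inter> ball a e \<and> pathstart g = a \<and> pathfinish g = b"
    if ab: "a \<in> D" "b \<in> D" "dist a b < \<delta> 0" for a b
  proof -
    obtain G where G0: "G 0 = linepath a b" and G: "\<And>n. polygonal_chain D (\<delta> n) a b (G n)"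
      and step: "\<And>n t. t \<in> {0..1} \<Longrightarrow> dist (G n t) (G (Suc n) t) \<le> 2 * c / 2 ^ n"
      using polygonal_chain_refinement_sequence[OF \<delta> ab] by blast
    obtain g where g: "path g" "pathstart g = a" "pathfinish g = b"
      and close: "\<And>n t. t \<in> {0..1} \<Longrightarrow> dist (G n t) (g t) \<le> 2 * (2 * c) / 2 ^ n"
      using path_limit_of_geometric_cauchy[of G a b "2 * c"] polygonal_chain_path[OF G] step by blast
    have "g t \<in> D" if t: "t \<in> {0..1}" for t
    proof (rule closed_approachable[OF compact_imp_closed[OF \<open>compact D\<close>], THEN iffD1], intro allI impI)
      fix r :: real assume "r > 0"
      obtain n where n: "5 * c / 2 ^ n < r"
        using real_arch_pow[of 2 "5 * c / r"] \<open>r > 0\<close> by (auto simp: field_simps)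
      obtain u where "u \<in> D" "dist u (G n t) < \<delta> n"
        using polygonal_chain_near[OF G t] by blast
      then have "dist u (g t) < r"
        using close[OF t, of n] \<delta>(2)[of n] n dist_triangle[of u "g t" "G n t"] by simp
      with \<open>u \<in> D\<close> show "\<exists>u\<in>D. dist u (g t) < r" by blast
    qed
    moreover have "dist a (g t) < e" if t: "t \<in> {0..1}" for t
      using dist_linepath_start_le[OF t, of a b] close[OF t, of 0] ab(3) \<delta>(2)[of 0]
        dist_triangle[of a "g t" "G 0 t"] G0 by (simp add: c_def)
    ultimately show ?thesis
      using g by (auto simp: path_image_def)
  qed
  with \<delta>(1) that show thesis by blast
qed

lemma compact_locally_connected_imp_locally_path_connected:
  fixes D :: "'a::{real_normed_vector,complete_space} set"
  assumes "compact D" "locally connected D"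
  shows "locally path_connected D"
  unfolding locally_path_connected_im_kleinen
proof (intro allI impI)
  fix W x assume W: "openin (top_of_set D) W \<and> x \<in> W"
  then obtain r where "r > 0" and r: "\<And>y. y \<in> D \<Longrightarrow> dist y x < r \<Longrightarrow> y \<in> W"
    unfolding openin_euclidean_subtopology_iff by blast
  have "x \<in> D" using W openin_imp_subset by blast
  obtain d where "d > 0" and d: "\<And>a b. a \<in> D \<Longrightarrow> b \<in> D \<Longrightarrow> dist a b < d \<Longrightarrow>
       \<exists>g. path g \<and> path_image g \<subseteq> D \<inter> ball a r \<and> pathstart g = a \<and> pathfinish g = b"
    using compact_locally_connected_imp_uniformly_locally_path_connected[OF assms \<open>r > 0\<close>] by blast
  have "D \<inter> ball x r \<subseteq> W"
    using r(1) by (auto simp: dist_commute)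
  moreover have "\<exists>g. path g \<and> path_image g \<subseteq> D \<inter> ball x r \<and> pathstart g = x \<and> pathfinish g = y"
    if "y \<in> D \<inter> ball x (min d r)" for y
    using d[of x y] that \<open>x \<in> D\<close> by simp
  ultimately have "\<exists>p. path p \<and> path_image p \<subseteq> W \<and> pathstart p = x \<and> pathfinish p = y"
    if "y \<in> D \<inter> ball x (min d r)" for y
    using that by (meson order_trans)
  then show "\<exists>U. openin (top_of_set D) U \<and> x \<in> U \<and> U \<subseteq> W \<and>
      (\<forall>y. y \<in> U \<longrightarrow> (\<exists>p. path p \<and> path_image p \<subseteq> W \<and> pathstart p = x \<and> pathfinish p = y))"
    using \<open>d > 0\<close> \<open>r > 0\<close> \<open>x \<in> D\<close> \<open>D \<inter> ball x r \<subseteq> W\<close>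
    by (intro exI[of _ "D \<inter> ball x (min d r)"] conjI) (auto simp: openin_open_Int)
qed

lemma closed_real_set_gap:
  fixes T :: "real set"
  assumes "closed T" "l \<in> T" "u \<in> T" "l \<le> s" "s \<le> u" "s \<notin> T"
  obtains a b where "a \<in> T" "b \<in> T" "l \<le> a" "a < s" "s < b" "b \<le> u"
    "{a<..<b} \<inter> T = {}"
proof -
  have "compact (T \<inter> {l..s})" "compact (T \<inter> {s..u})"
    using \<open>closed T\<close> by (simp_all add: compact_eq_bounded_closed bounded_Int closed_Int)
  moreover have "l \<in> T \<inter> {l..s}" "u \<in> T \<inter> {s..u}"
    using assms by auto
  ultimately obtain a b where a: "a \<in> T \<inter> {l..s}" "\<And>t. t \<in> T \<inter> {l..s} \<Longrightarrow> t \<le> a"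
    and b: "b \<in> T \<inter> {s..u}" "\<And>t. t \<in> T \<inter> {s..u} \<Longrightarrow> b \<le> t"
    by (metis compact_attains_sup compact_attains_inf empty_iff)
  have "a \<noteq> s" "b \<noteq> s" using a(1) b(1) \<open>s \<notin> T\<close> by auto
  have "t \<notin> T" if "a < t" "t < b" for t
    using a b that by (cases "t \<le> s") force+
  with a(1) b(1) \<open>a \<noteq> s\<close> \<open>b \<noteq> s\<close> show thesis
    using that by force
qed

lemma path_excursion_from_closed:
  fixes \<gamma> :: "real \<Rightarrow> 'a::topological_space"
  assumes "path \<gamma>" "closed K" "\<gamma> 0 \<in> K" "\<gamma> 1 \<in> K" "s \<in> {0..1}" "\<gamma> s \<notin> K"
  obtains a b where "0 \<le> a" "a < s" "s < b" "b \<le> 1" "\<gamma> a \<in> K" "\<gamma> b \<in> K"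
    "\<And>t. a < t \<Longrightarrow> t < b \<Longrightarrow> \<gamma> t \<notin> K"
proof -
  define T where "T = {0..1} \<inter> \<gamma> -` K"
  have "closed T"
    unfolding T_def using assms(1,2) by (intro continuous_closed_preimage) (auto simp: path_def)
  moreover have "0 \<in> T" "1 \<in> T" "s \<notin> T"
    using assms(3-6) by (auto simp: T_def)
  ultimately obtain a b where ab: "a \<in> T" "b \<in> T" "0 \<le> a" "a < s" "s < b" "b \<le> 1"
    and gap: "{a<..<b} \<inter> T = {}"
    using closed_real_set_gap[of T 0 1 s] assms(5) by auto
  have "\<gamma> t \<notin> K" if "a < t" "t < b" for t
    using gap that ab(3,6) by (auto simp: T_def)
  then show thesis
    using that ab by (auto simp: T_def)
qed

text \<open>The curve consists of the part of \<open>\<gamma>\<close> between its last visit to \<open>\<eta>\<close> before \<open>s\<close> and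
  its first visit after \<open>s\<close>, closed up by the corresponding subarc of \<open>\<eta>\<close>.\<close>

lemma arcs_with_common_ends_contain_simple_closed_curve:
  fixes \<gamma> \<eta> :: "real \<Rightarrow> 'a::real_normed_vector"
  assumes arcs: "arc \<gamma>" "arc \<eta>" and ends: "pathstart \<eta> = pathstart \<gamma>" "pathfinish \<eta> = pathfinish \<gamma>"
    and "s \<in> {0..1}" "\<gamma> s \<notin> path_image \<eta>"
  obtains S where "S \<subseteq> path_image \<gamma> \<union> path_image \<eta>" "simple_closed_curve S"
proof -
  have "\<gamma> 0 \<in> path_image \<eta>" "\<gamma> 1 \<in> path_image \<eta>"
    using ends pathstart_in_path_image[of \<eta>] pathfinish_in_path_image[of \<eta>]
    by (auto simp: pathstart_def pathfinish_def)
  then obtain a b where ab: "0 \<le> a" "a < s" "s < b" "b \<le> 1"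
      "\<gamma> a \<in> path_image \<eta>" "\<gamma> b \<in> path_image \<eta>"
    and gap: "\<And>t. a < t \<Longrightarrow> t < b \<Longrightarrow> \<gamma> t \<notin> path_image \<eta>"
    using path_excursion_from_closed[OF arc_imp_path[OF arcs(1)] closed_path_image[OF arc_imp_path[OF arcs(2)]]]
      assms(5,6) by blast
  obtain u v where uv: "u \<in> {0..1}" "\<eta> u = \<gamma> a" "v \<in> {0..1}" "\<eta> v = \<gamma> b"
    using ab(5,6) by (auto simp: path_image_def)
  have "\<gamma> a \<noteq> \<gamma> b"
    using arc_imp_inj_on[OF arcs(1)] ab by (auto dest: inj_onD)
  then have "u \<noteq> v" using uv by auto
  define c1 where "c1 = subpath a b \<gamma>"
  define c2 where "c2 = subpath v u \<eta>"
  have "arc c1" "arc c2"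
    unfolding c1_def c2_def using arcs ab uv \<open>u \<noteq> v\<close> by (auto intro!: arc_subpath_arc)
  moreover have c12: "pathfinish c1 = pathstart c2" "pathfinish c2 = pathstart c1"
    using uv by (auto simp: c1_def c2_def)
  moreover have "path_image c1 \<inter> path_image c2 \<subseteq> {pathstart c1, pathstart c2}"
  proof
    fix y assume y: "y \<in> path_image c1 \<inter> path_image c2"
    then obtain t where t: "t \<in> {a..b}" "y = \<gamma> t"
      using ab by (auto simp: c1_def path_image_subpath)
    have "y \<in> path_image \<eta>"
      using y uv path_image_subpath_subset[of v u \<eta>] by (auto simp: c2_def)
    then have "t = a \<or> t = b"
      using gap[of t] t by force
    then show "y \<in> {pathstart c1, pathstart c2}"
      using t c12(1) by (auto simp: c1_def)
  qed
  ultimately have "simple_path (c1 +++ c2)" "pathfinish (c1 +++ c2) = pathstart (c1 +++ c2)"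
    by (auto intro: simple_path_join_loop)
  then have "simple_closed_curve (path_image (c1 +++ c2))"
    unfolding simple_closed_curve_def by (intro homeomorphic_simple_path_image_circle) auto
  moreover have "path_image c1 \<subseteq> path_image \<gamma>" "path_image c2 \<subseteq> path_image \<eta>"
    unfolding c1_def c2_def using ab uv by (simp_all add: path_image_subpath_subset)
  then have "path_image (c1 +++ c2) \<subseteq> path_image \<gamma> \<union> path_image \<eta>"
    using path_image_join[OF c12(1)] by blast
  ultimately show thesis using that by blast
qed

lemma connected_component_arc:
  fixes S :: "'a::{real_normed_vector,complete_space} set"
  assumes "locally path_connected S" "connected_component S p q" "p \<noteq> q"
  obtains \<gamma> where "arc \<gamma>" "path_image \<gamma> \<subseteq> S" "pathstart \<gamma> = p" "pathfinish \<gamma> = q"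
proof -
  have "path_component S p q"
    using path_component_eq_connected_component[OF assms(1)] assms(2) by metis
  then have "p \<in> path_component_set S p" "q \<in> path_component_set S p"
    by (auto intro: path_component_refl dest: path_component_mem)
  moreover have "\<forall>x\<in>path_component_set S p. \<forall>y\<in>path_component_set S p. x \<noteq> y \<longrightarrow>
      (\<exists>g. arc g \<and> path_image g \<subseteq> path_component_set S p \<and> pathstart g = x \<and> pathfinish g = y)"
    using path_connected_path_component[of S p] unfolding path_connected_arcwise .
  ultimately obtain \<gamma> where "arc \<gamma>" "path_image \<gamma> \<subseteq> path_component_set S p"
      "pathstart \<gamma> = p" "pathfinish \<gamma> = q"
    using \<open>p \<noteq> q\<close> by meson
  then show thesis
    using that path_component_subset by blast
qed

lemma dendrite_separating_point_banach:
  fixes D :: "'a::{real_normed_vector,complete_space} set"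
  assumes "dendrite D" and pq: "p \<in> D" "q \<in> D" "p \<noteq> q"
  obtains x where "x \<in> D" "x \<noteq> p" "x \<noteq> q" "\<not> connected_component (D - {x}) p q"
proof -
  have D: "compact D" "connected D" "locally connected D"
    and no_curve: "\<And>S. S \<subseteq> D \<Longrightarrow> \<not> simple_closed_curve S"
    using assms(1) unfolding dendrite_def continuum_def by auto
  have lpc: "locally path_connected D"
    using compact_locally_connected_imp_locally_path_connected[OF D(1,3)] .
  have "connected_component D p q"
    using D(2) pq unfolding connected_component_def by blast
  then obtain \<gamma> where \<gamma>: "arc \<gamma>" "path_image \<gamma> \<subseteq> D" "pathstart \<gamma> = p" "pathfinish \<gamma> = q"
    using connected_component_arc[OF lpc] \<open>p \<noteq> q\<close> by blast
  define x where "x = \<gamma> (1/2)"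
  have "x \<in> D"
    using \<gamma>(2) by (auto simp: x_def path_image_def)
  moreover have "x \<noteq> p" "x \<noteq> q"
    using \<gamma>(3,4) arc_imp_inj_on[OF \<gamma>(1)]
    by (auto simp: x_def pathstart_def pathfinish_def dest: inj_onD)
  moreover have "\<not> connected_component (D - {x}) p q"
  proof
    assume "connected_component (D - {x}) p q"
    moreover have "locally path_connected (D - {x})"
      using locally_open_subset[OF lpc openin_delete[OF openin_subtopology_self]] by simp
    ultimately obtain \<eta> where \<eta>: "arc \<eta>" "path_image \<eta> \<subseteq> D - {x}" "pathstart \<eta> = p" "pathfinish \<eta> = q"
      using connected_component_arc \<open>p \<noteq> q\<close> by blast
    obtain S where "S \<subseteq> path_image \<gamma> \<union> path_image \<eta>" "simple_closed_curve S"
      using arcs_with_common_ends_contain_simple_closed_curve[OF \<gamma>(1) \<eta>(1), of "1/2"] \<gamma> \<eta>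
      by (auto simp: x_def)
    then show False
      using no_curve \<gamma>(2) \<eta>(2) by blast
  qed
  ultimately show thesis
    using that by blast
qed

lemma isometric_embedding_bcontfun:
  obtains \<phi> :: "'a::metric_space \<Rightarrow> ('a \<Rightarrow>\<^sub>C real)" where "\<And>x y. dist (\<phi> x) (\<phi> y) = dist x y"
proof
  \<comment> \<open>Kuratowski's embedding; any base point would do in place of \<open>undefined\<close>.\<close>
  define f where "f x = (\<lambda>y. dist x y - dist undefined y)" for x :: 'a
  have "f x \<in> bcontfun" for x
    unfolding bcontfun_def
  proof (intro CollectI conjI)
    show "continuous_on UNIV (f x)"
      unfolding f_def by (intro continuous_intros)
    show "bounded (range (f x))"
    proof (rule boundedI)
      fix z assume "z \<in> range (f x)"
      then show "norm z \<le> dist x undefined"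
        by (auto simp: f_def) metric
    qed
  qed
  then have apply_f: "apply_bcontfun (Bcontfun (f x)) z = dist x z - dist undefined z" for x z
    by (simp add: Bcontfun_inverse f_def)
  fix x y :: 'a
  have "dist (Bcontfun (f x)) (Bcontfun (f y)) \<le> dist x y"
  proof (rule dist_bound)
    fix z
    have "\<bar>dist x z - dist y z\<bar> \<le> dist x y"
      using dist_triangle[of x z y] dist_triangle[of y z x] dist_commute[of x y] by linarith
    then show "dist (Bcontfun (f x) z) (Bcontfun (f y) z) \<le> dist x y"
      by (simp add: apply_f dist_real_def)
  qed
  moreover have "dist x y \<le> dist (Bcontfun (f x)) (Bcontfun (f y))"
    using dist_bounded[of "Bcontfun (f x)" y "Bcontfun (f y)"] by (simp add: apply_f dist_real_def)
  ultimately show "dist (Bcontfun (f x)) (Bcontfun (f y)) = dist x y"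
    by linarith
qed

lemma dendrite_homeomorphic:
  fixes S :: "'a::metric_space set" and T :: "'b::metric_space set"
  assumes "S homeomorphic T" "dendrite S"
  shows "dendrite T"
proof -
  obtain f g where hom: "homeomorphism S T f g"
    using assms(1) unfolding homeomorphic_def by blast
  have S: "S \<noteq> {}" "compact S" "connected S" "locally connected S"
    using assms(2) unfolding dendrite_def continuum_def by auto
  then have "continuum T"
    unfolding continuum_def
    using assms(1) homeomorphic_compactness homeomorphic_connectedness by auto
  moreover have "locally connected S \<longleftrightarrow> locally connected T"
    using assms(1) by (rule homeomorphic_locally) (rule homeomorphic_connectedness)
  moreover have "\<not> simple_closed_curve C" if "C \<subseteq> T" for C
  proof
    assume "simple_closed_curve C"
    moreover have "homeomorphism C (g ` C) g f"
      using homeomorphism_of_subsets[OF homeomorphism_symD[OF hom] that order_refl refl] .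
    then have "g ` C homeomorphic C"
      using homeomorphic_def homeomorphic_sym by blast
    ultimately have "simple_closed_curve (g ` C)"
      unfolding simple_closed_curve_def using homeomorphic_trans by blast
    moreover have "g ` C \<subseteq> S"
      using hom that by (auto simp: homeomorphism_def)
    ultimately show False
      using assms(2) unfolding dendrite_def by blast
  qed
  ultimately show ?thesis
    using S(4) unfolding dendrite_def by blast
qed

text \<open>Arcs are only available in Banach spaces, so \<open>D\<close> is transported there along an
  isometric embedding.\<close>

lemma dendrite_separating_point:
  fixes D :: "'a::metric_space set"
  assumes "dendrite D" "p \<in> D" "q \<in> D" "p \<noteq> q"
  obtains x where "x \<in> D" "x \<noteq> p" "x \<noteq> q" "\<not> connected_component (D - {x}) p q"
proof -
  obtain \<phi> :: "'a \<Rightarrow> ('a \<Rightarrow>\<^sub>C real)" where \<phi>: "\<And>x y. dist (\<phi> x) (\<phi> y) = dist x y"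
    using isometric_embedding_bcontfun by blast
  have cont: "continuous_on D \<phi>"
    unfolding continuous_on_iff \<phi> by blast
  have inj: "inj_on \<phi> D"
    using \<phi> by (metis dist_eq_0_iff inj_onI)
  have "compact D"
    using assms(1) by (simp add: dendrite_def continuum_def)
  then have "D homeomorphic \<phi> ` D"
    using homeomorphism_compact[OF _ cont refl inj] homeomorphic_def by blast
  then have "dendrite (\<phi> ` D)"
    using dendrite_homeomorphic assms(1) by blast
  moreover have "\<phi> p \<noteq> \<phi> q"
    using \<phi> assms(4) by (metis dist_eq_0_iff)
  ultimately obtain x' where "x' \<in> \<phi> ` D" "x' \<noteq> \<phi> p" "x' \<noteq> \<phi> q"
      "\<not> connected_component (\<phi> ` D - {x'}) (\<phi> p) (\<phi> q)"
    using dendrite_separating_point_banach assms(2,3) by blast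
  then obtain x where x: "x \<in> D" "x \<noteq> p" "x \<noteq> q"
    and sep: "\<not> connected_component (\<phi> ` D - {\<phi> x}) (\<phi> p) (\<phi> q)"
    by blast
  have "\<not> connected_component (D - {x}) p q"
  proof
    assume "connected_component (D - {x}) p q"
    then obtain K where K: "connected K" "K \<subseteq> D - {x}" "p \<in> K" "q \<in> K"
      unfolding connected_component_def by blast
    then have "connected (\<phi> ` K)" "\<phi> ` K \<subseteq> \<phi> ` D - {\<phi> x}"
      using connected_continuous_image[OF continuous_on_subset[OF cont]] inj x(1)
      by (auto dest: inj_onD)
    then show False
      using sep K(3,4) unfolding connected_component_def by blast
  qed
  with x that show thesis by blast
qed

lemma connected_clopenin_in_components:
  assumes "connected C" "C \<noteq> {}" "openin (top_of_set S) C" "closedin (top_of_set S) C"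
  shows "C \<in> components S"
proof -
  obtain x where "x \<in> C" using assms(2) by blast
  define K where "K = connected_component_set S x"
  have "C \<subseteq> S" using assms(3) by (rule openin_imp_subset)
  then have "C \<subseteq> K"
    using connected_component_maximal[OF \<open>x \<in> C\<close> assms(1)] by (simp add: K_def)
  have "K \<subseteq> S"
    by (simp add: K_def connected_component_subset)
  have "openin (top_of_set K) C" "closedin (top_of_set K) C"
    using openin_subset_trans[OF assms(3)] closedin_subset_trans[OF assms(4)] \<open>C \<subseteq> K\<close> \<open>K \<subseteq> S\<close>
    by auto
  then have "C = K"
    using connected_clopen[THEN iffD1, OF connected_connected_component, of S x] assms(2)
    unfolding K_def by blast
  then show ?thesis
    using \<open>C \<subseteq> S\<close> \<open>x \<in> C\<close> by (auto simp: K_def componentsI)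
qed

lemma frontier_of_openin_one_point_closure:
  assumes "connected_space X" "openin X C" "c \<notin> C" "X closure_of C = insert c C"
    and "insert c C \<noteq> topspace X"
  shows "X frontier_of C = {c}" "X frontier_of (X closure_of C) = {c}"
proof -
  show "X frontier_of C = {c}"
    using assms(3,4) by (auto simp: frontier_of_def interior_of_openin[OF assms(2)])
  have "X interior_of (insert c C) = C"
  proof
    show "C \<subseteq> X interior_of (insert c C)"
      using assms(2) by (simp add: interior_of_maximal subset_insertI)
    show "X interior_of (insert c C) \<subseteq> C"
    proof
      fix y assume y: "y \<in> X interior_of (insert c C)"
      show "y \<in> C"
      proof (rule ccontr)
        assume "y \<notin> C"
        with y have "X interior_of (insert c C) = insert c C"
          using interior_of_subset[of X "insert c C"] \<open>C \<subseteq> X interior_of (insert c C)\<close> by blast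
        then have "openin X (insert c C)" "closedin X (insert c C)"
          using assms(4) by (metis openin_interior_of, metis closedin_closure_of)
        then show False
          using assms(1,5) by (auto simp: connected_space_clopen_in)
      qed
    qed
  qed
  moreover have "X closure_of (insert c C) = insert c C"
    using assms(4) closure_of_closure_of by metis
  ultimately show "X frontier_of (X closure_of C) = {c}"
    using assms(3,4) by (auto simp: frontier_of_def)
qed

lemma openin_component_complement:
  fixes D B C :: "'a::metric_space set"
  assumes "locally connected D" "closed B" "C \<in> components (D - B)"
  shows "openin (top_of_set D) C"
proof -
  have "openin (top_of_set D) (D - B)"
    using assms(2) by (simp add: Diff_eq openin_open_Int open_Compl)
  then show ?thesis
    using assms(1,3) unfolding locally_connected_open_component by blast
qed

lemma closure_component_diff_subset:
  fixes D B C :: "'a::metric_space set"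
  assumes "closed D" "locally connected D" "closed B" "C \<in> components (D - B)"
  shows "closure C - C \<subseteq> B"
proof
  fix y assume y: "y \<in> closure C - C"
  show "y \<in> B"
  proof (rule ccontr)
    assume "y \<notin> B"
    have "C \<subseteq> D - B" using assms(4) by (rule in_components_subset)
    then have "y \<in> D - B"
      using y \<open>y \<notin> B\<close> closure_minimal[OF _ assms(1), of C] by auto
    define K where "K = connected_component_set (D - B) y"
    have "K \<in> components (D - B)"
      using \<open>y \<in> D - B\<close> by (simp add: K_def componentsI)
    then have "openin (top_of_set D) K"
      using openin_component_complement[OF assms(2,3)] by blast
    then obtain W where "open W" "K = D \<inter> W"
      unfolding openin_open by blast
    moreover have "y \<in> K"
      using \<open>y \<in> D - B\<close> by (simp add: K_def)
    ultimately have "W \<inter> C \<noteq> {}"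
      using y open_Int_closure_eq_empty[of W C] by blast
    then have "K \<inter> C \<noteq> {}"
      using \<open>K = D \<inter> W\<close> \<open>C \<subseteq> D - B\<close> by blast
    then have "K = C"
      using components_nonoverlap[OF \<open>K \<in> components (D - B)\<close> assms(4)] by blast
    then show False
      using \<open>y \<in> K\<close> y by blast
  qed
qed

lemma component_of_punctured_if_closure_insert:
  assumes "openin (top_of_set D) C" "connected C" "C \<noteq> {}" "c \<notin> C" "closure C = insert c C"
  shows "C \<in> components (D - {c})"
proof (rule connected_clopenin_in_components[OF assms(2,3)])
  show "openin (top_of_set (D - {c})) C"
    by (rule openin_subset_trans[OF assms(1)]) (use openin_imp_subset[OF assms(1)] assms(4) in auto)
  have "(D - {c}) \<inter> closure C = C"
    unfolding assms(5) using openin_imp_subset[OF assms(1)] assms(4) by blast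
  then show "closedin (top_of_set (D - {c})) C"
    using closedin_closed_Int[OF closed_closure, of "D - {c}" C] by simp
qed

lemma cutpoint_if_proper_component:
  assumes "C \<in> components (D - {c})" "C \<noteq> D - {c}" "c \<in> D"
  shows "cutpoint D c"
proof -
  have "\<not> connected (D - {c})"
  proof
    assume "connected (D - {c})"
    then have "components (D - {c}) = {D - {c}}"
      using in_components_nonempty[OF assms(1)] in_components_subset[OF assms(1)]
      by (intro components_eq_sing_iff[THEN iffD2]) auto
    then show False
      using assms(1,2) by auto
  qed
  then show ?thesis
    using assms(3) by (simp add: cutpoint_def)
qed

lemma closure_diff_nonempty_openin:
  assumes "connected D" "openin (top_of_set D) C" "C \<noteq> {}" "C \<noteq> D"
  shows "closure C - C \<noteq> {}"
proof
  assume "closure C - C = {}"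
  then have "closed C"
    using closure_subset_eq by blast
  then have "closedin (top_of_set D) C"
    using closed_subset openin_imp_subset[OF assms(2)] by blast
  then show False
    using connected_clopen[THEN iffD1, OF assms(1)] assms(2-4) by blast
qed

lemma dendrite_component_closure:
  fixes D B C :: "'a::metric_space set"
  assumes "dendrite D" "subdendrite D B" "C \<in> components (D - B)"
  obtains c where "c \<in> B" "closure C = insert c C"
proof -
  have D: "compact D" "connected D" "locally connected D"
    using assms(1) unfolding dendrite_def continuum_def by auto
  have B: "B \<subseteq> D" "B \<noteq> {}" "compact B" "connected B"
    using assms(2) unfolding subdendrite_def continuum_def by auto
  have C: "C \<subseteq> D - B" "connected C" "C \<noteq> {}"
    using in_components_subset[OF assms(3)] in_components_connected[OF assms(3)]
      in_components_nonempty[OF assms(3)] by auto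
  have frontier: "closure C - C \<subseteq> B"
    using closure_component_diff_subset[OF compact_imp_closed[OF D(1)] D(3) compact_imp_closed[OF B(3)] assms(3)] .
  have "C \<noteq> D"
    using B(1,2) C(1) by blast
  then have "closure C - C \<noteq> {}"
    by (rule closure_diff_nonempty_openin[OF D(2)
        openin_component_complement[OF D(3) compact_imp_closed[OF B(3)] assms(3)] C(3)])
  \<comment> \<open>A point separating two limit points \<open>p, q \<in> B\<close> cannot lie in \<open>C\<close>, as \<open>B\<close> joins them
    in its complement, nor outside \<open>C\<close>, as \<open>C \<union> {p, q}\<close> does.\<close>
  moreover have "p = q" if "p \<in> closure C - C" "q \<in> closure C - C" for p q
  proof (rule ccontr)
    assume "p \<noteq> q"
    have "p \<in> B" "q \<in> B" using that frontier by auto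
    then obtain x where x: "x \<in> D" "x \<noteq> p" "x \<noteq> q" "\<not> connected_component (D - {x}) p q"
      using dendrite_separating_point[OF assms(1), of p q] B(1) \<open>p \<noteq> q\<close> by blast
    show False
    proof (cases "x \<in> C")
      case True
      then have "B \<subseteq> D - {x}" using B(1) C(1) by blast
      then show False
        using x(4) B(4) \<open>p \<in> B\<close> \<open>q \<in> B\<close> unfolding connected_component_def by blast
    next
      case False
      have "connected (insert p (insert q C))"
        by (rule connected_intermediate_closure[OF C(2)]) (use that closure_subset in auto)
      moreover have "insert p (insert q C) \<subseteq> D - {x}"
        using False x B(1) \<open>p \<in> B\<close> \<open>q \<in> B\<close> C(1) by auto
      ultimately show False
        using x(4) unfolding connected_component_def by blast
    qed
  qed
  ultimately obtain c where "closure C - C = {c}" by blast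
  then show thesis
    using that frontier closure_subset[of C] by blast
qed

lemma dendrite_complement_component:
  fixes D B C :: "'a::metric_space set"
  assumes "dendrite D" "subdendrite D B" "nondegenerate B" "C \<in> components (D - B)"
  obtains c where "c \<in> B" "cutpoint D c" "C \<in> components (D - {c})" "clD D C = insert c C"
    "connected (insert c C)" "Bd D C = {c}" "Bd D (clD D C) = {c}"
proof -
  obtain c where "c \<in> B" and closure: "closure C = insert c C"
    using dendrite_component_closure[OF assms(1,2,4)] by blast
  have D: "compact D" "connected D" "locally connected D"
    using assms(1) unfolding dendrite_def continuum_def by auto
  have B: "B \<subseteq> D" "closed B"
    using assms(2) unfolding subdendrite_def continuum_def by (auto simp: compact_imp_closed)
  have C: "C \<subseteq> D - B" "connected C" "C \<noteq> {}"
    using in_components_subset[OF assms(4)] in_components_connected[OF assms(4)]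
      in_components_nonempty[OF assms(4)] by auto
  obtain b where "b \<in> B" "b \<noteq> c"
    using assms(3) unfolding nondegenerate_def by blast
  have "c \<notin> C" "c \<in> D" "b \<in> D - {c} - C"
    using \<open>c \<in> B\<close> \<open>b \<in> B\<close> \<open>b \<noteq> c\<close> B(1) C(1) by auto
  have open_C: "openin (top_of_set D) C"
    using openin_component_complement[OF D(3) B(2) assms(4)] .
  have "D \<inter> C = C" "D \<inter> insert c C = insert c C"
    using C(1) \<open>c \<in> D\<close> by auto
  then have clD_eq: "clD D C = insert c C"
    by (simp add: clD_def closure_of_subtopology closure)
  have "connected_space (top_of_set D)"
    using D(2) by (simp add: connected_space_subtopology)
  moreover have "insert c C \<noteq> topspace (top_of_set D)"
    using \<open>b \<in> D - {c} - C\<close> by auto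
  ultimately have Bd: "Bd D C = {c}" "Bd D (clD D C) = {c}"
    using frontier_of_openin_one_point_closure[OF _ open_C \<open>c \<notin> C\<close>] clD_eq
    unfolding Bd_def clD_def by blast+
  have component: "C \<in> components (D - {c})"
    using component_of_punctured_if_closure_insert[OF open_C C(2,3) \<open>c \<notin> C\<close> closure] .
  then have "cutpoint D c"
    using cutpoint_if_proper_component[of C D c] \<open>b \<in> D - {c} - C\<close> \<open>c \<in> D\<close> by blast
  moreover have "connected (insert c C)"
    using connected_imp_connected_closure[OF C(2)] closure by simp
  ultimately show thesis
    using that[OF \<open>c \<in> B\<close> _ component clD_eq _ Bd] by blast
qed

lemma component_boundary_point_in_connected:
  assumes "C \<in> components (D - {c})" "C \<inter> B = {}" "connected X" "X \<subseteq> D"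
    "X \<inter> C \<noteq> {}" "X \<inter> B \<noteq> {}"
  shows "c \<in> X"
  using components_maximal[OF assms(1,3)] assms(2,4-6) by blast

theorem lemma10:
  fixes D A1 A2 B1 B2 C1 C2 :: "'a::metric_space set"
  assumes "dendrite D"
    and "subdendrite D A1" "subdendrite D A2" "subdendrite D B1" "subdendrite D B2"
    and "nondegenerate A1" "nondegenerate A2" "nondegenerate B1" "nondegenerate B2"
    and "A1 \<inter> B1 = {}" "A2 \<inter> B2 = {}"
    and "A1 \<inter> A2 \<noteq> {}" "B1 \<inter> B2 \<noteq> {}" "A1 \<inter> B2 \<noteq> {}"
    and "C1 \<in> components (D - B1)" "A1 \<subseteq> C1"
    and "C2 \<in> components (D - B2)" "A2 \<subseteq> C2"
  shows "\<exists>c1 c2.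
           c1 \<in> B1 \<and> cutpoint D c1 \<and> Bd D C1 = {c1} \<and> Bd D (clD D C1) = {c1} \<and>
           c2 \<in> B2 \<and> cutpoint D c2 \<and> Bd D C2 = {c2} \<and> Bd D (clD D C2) = {c2} \<and>
           c2 \<in> A1 \<inter> B2 \<and> c1 \<notin> clD D C2 \<and> C2 \<subset> C1"
proof -
  obtain c1 where c1: "c1 \<in> B1" "cutpoint D c1" "Bd D C1 = {c1}" "Bd D (clD D C1) = {c1}"
    by (rule dendrite_complement_component[OF assms(1,4,8,15)])
  obtain c2 where c2: "c2 \<in> B2" "cutpoint D c2" "C2 \<in> components (D - {c2})"
      "clD D C2 = insert c2 C2" "connected (insert c2 C2)" "Bd D C2 = {c2}" "Bd D (clD D C2) = {c2}"
    by (rule dendrite_complement_component[OF assms(1,5,9,17)])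
  have "A1 \<subseteq> D" "connected A1" "B1 \<subseteq> D" "connected B1"
    using assms(2,4) unfolding subdendrite_def continuum_def by auto
  have "C2 \<subseteq> D - B2"
    using assms(17) by (rule in_components_subset)
  then have "C2 \<inter> B2 = {}" by blast
  have "c2 \<in> A1"
    using component_boundary_point_in_connected[OF c2(3) \<open>C2 \<inter> B2 = {}\<close> \<open>connected A1\<close> \<open>A1 \<subseteq> D\<close>]
      assms(12,14,18) by blast
  have "B1 \<inter> C2 = {}"
    using component_boundary_point_in_connected[OF c2(3) \<open>C2 \<inter> B2 = {}\<close> \<open>connected B1\<close> \<open>B1 \<subseteq> D\<close>]
      \<open>c2 \<in> A1\<close> assms(10,13) by blast
  have "insert c2 C2 \<subseteq> D - B1"
    using \<open>c2 \<in> A1\<close> \<open>A1 \<subseteq> D\<close> \<open>C2 \<subseteq> D - B2\<close> \<open>B1 \<inter> C2 = {}\<close> assms(10) by blast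
  moreover have "C1 \<inter> insert c2 C2 \<noteq> {}"
    using assms(12,16,18) by blast
  ultimately have "insert c2 C2 \<subseteq> C1"
    by (rule components_maximal[OF assms(15) c2(5)])
  then have "C2 \<subset> C1"
    using c2(1) \<open>C2 \<inter> B2 = {}\<close> by blast
  have "c1 \<notin> clD D C2"
    using c2(4) c1(1) \<open>c2 \<in> A1\<close> \<open>B1 \<inter> C2 = {}\<close> assms(10) by auto
  show ?thesis
    using c1 c2(1,2,6,7) \<open>c2 \<in> A1\<close> \<open>c1 \<notin> clD D C2\<close> \<open>C2 \<subset> C1\<close>
    by (intro exI[of _ c1] exI[of _ c2] conjI IntI) simp_all
qed

end
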